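(* There is an absolute constant $C>0$ such that the following holds. Let $A$ be a real $n\times n$ matrix, let $0<q\le n$, and let $Q$ be a random subset of $\{1,\dots,n\}$ in which each element is included independently with probability $q/n$. Then $$\mathbb E\,\|A|_{Q\times Q}\|_C\ \le\ C\Bigl(\Bigl(\frac qn\Bigr)^2\|A-D(A)\|_C+\frac qn\,\|D(A)\|_C+\Bigl(\frac qn\Bigr)^{3/2}\bigl(\|A\|_{\rm Col}+\|A^T\|_{\rm Col}\bigr)\Bigr).$$
   Context: The cut norm of a matrix $B=(B_{ij})$ is $\|B\|_C=\max_{I,J}\bigl|\sum_{i\in I,j\in J}B_{ij}\bigr|$, the maximum over all subsets $I$ of row indices and $J$ of column indices. $A|_{Q\times Q}=(A_{ij})_{i,j\in Q}$ is the principal submatrix on $Q$ (its cut norm is $0$ if $Q=\emptyset$). $D(A)$ is the diagonal part of $A$ (the matrix with the same diagonal as $A$ and zeros off the diagonal). $\|A\|_{\rm Col}$ is the sum of the Euclidean lengths of the columns of $A$. *)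

theory Defs
  imports Complex_Main
begin

text \<open>Real n x n matrices are represented as functions nat => nat => real,
  with row/column indices ranging over the finite index set {1..n}.\<close>

text \<open>For S = {} this is 0.  Applied to S = Q it is the cut norm of A restricted to Q x Q.\<close>
definition cut_norm :: "nat set \<Rightarrow> (nat \<Rightarrow> nat \<Rightarrow> real) \<Rightarrow> real" where
  "cut_norm S B = Max {\<bar>\<Sum>i\<in>I. \<Sum>j\<in>J. B i j\<bar> | I J. I \<subseteq> S \<and> J \<subseteq> S}"

definition diag_part :: "(nat \<Rightarrow> nat \<Rightarrow> real) \<Rightarrow> (nat \<Rightarrow> nat \<Rightarrow> real)" where
  "diag_part A = (\<lambda>i j. if i = j then A i j else 0)"

definition transp_mat :: "(nat \<Rightarrow> nat \<Rightarrow> real) \<Rightarrow> (nat \<Rightarrow> nat \<Rightarrow> real)" where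
  "transp_mat A = (\<lambda>i j. A j i)"

definition col_norm :: "nat \<Rightarrow> (nat \<Rightarrow> nat \<Rightarrow> real) \<Rightarrow> real" where
  "col_norm n A = (\<Sum>j\<in>{1..n}. sqrt (\<Sum>i\<in>{1..n}. (A i j)\<^sup>2))"

definition random_subset_expect :: "nat \<Rightarrow> real \<Rightarrow> (nat set \<Rightarrow> real) \<Rightarrow> real" where
  "random_subset_expect n p f =
     (\<Sum>Q\<in>Pow {1..n}. p ^ card Q * (1 - p) ^ (n - card Q) * f Q)"

end

theory Submission
  imports Defs
begin

text \<open>
  Split \<open>A\<close> into its off-diagonal part \<open>B\<close> and its diagonal part \<open>D\<close>. The cut norm of
  \<open>D\<close> on \<open>Q \<times> Q\<close> is at most the sum of \<open>|A i i|\<close> over \<open>Q\<close>, whose mean is \<open>p\<close> times a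
  quantity bounded by \<open>2 \<parallel>D\<parallel>\<^sub>C\<close>.

  For \<open>B\<close>, put each index into a set \<open>S\<close> independently with probability 1/2: an
  off-diagonal entry lands in \<open>S \<times> (X - S)\<close> with probability 1/4, so the cut norm of \<open>B\<close>
  on \<open>Q \<times> Q\<close> is at most 4 times its mean on \<open>(Q \<inter> S) \<times> (Q - S)\<close>, and for fixed \<open>S\<close> the
  row sample \<open>Q \<inter> S\<close> and the column sample \<open>Q - S\<close> are independent.

  It remains to sample one side of a block \<open>M\<close> on \<open>R \<times> J0\<close>. Its cut norm on \<open>Q \<times> J0\<close> is
  bounded by the largest sum over \<open>i \<in> Q\<close> of the positive parts of the row sums over
  \<open>J \<subseteq> J0\<close>, plus the same for \<open>-M\<close>. Writing the indicator of \<open>Q\<close> as \<open>p\<close> plus a centred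
  selector, the mean part is at most \<open>p \<parallel>M\<parallel>\<^sub>C\<close>; the centred part is removed by
  symmetrisation and the contraction principle for the 1-Lipschitz map \<open>x \<mapsto> max 0 x\<close>,
  leaving for each column \<open>j\<close> a symmetrised selector sum whose second moment is at most
  \<open>2 p\<close> times the squared length of the column. Hence the mean cut norm of the sampled block
  is at most \<open>2 p \<parallel>M\<parallel>\<^sub>C\<close> plus \<open>4 \<surd>p\<close> times the sum of the column lengths of \<open>M\<close>;
  applying this to the rows and then to the columns gives the terms of order \<open>p\<^sup>2\<close> and
  \<open>p powr (3/2)\<close>.
\<close>

section \<open>Random subsets\<close>

definition subset_expect :: "'a set \<Rightarrow> real \<Rightarrow> ('a set \<Rightarrow> real) \<Rightarrow> real" where
  "subset_expect X p f = (\<Sum>Q\<in>Pow X. p ^ card Q * (1 - p) ^ (card X - card Q) * f Q)"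

lemma random_subset_expect_eq_subset_expect:
  "random_subset_expect n p f = subset_expect {1..n} p f"
  by (simp add: random_subset_expect_def subset_expect_def)

lemma subset_expect_empty [simp]: "subset_expect {} p f = f {}"
  by (simp add: subset_expect_def)

lemma subset_expect_insert:
  assumes "finite X" "a \<notin> X"
  shows "subset_expect (insert a X) p f
    = p * subset_expect X p (\<lambda>Q. f (insert a Q)) + (1 - p) * subset_expect X p f"
proof -
  have inj: "inj_on (insert a) (Pow X)"
    using assms(2) unfolding inj_on_def by (metis Pow_iff insert_absorb insert_ident subsetD)
  have card_le: "card Q \<le> card X" if "Q \<in> Pow X" for Q
    using that assms(1) by (simp add: card_mono)
  have with_a: "(\<Sum>Q\<in>insert a ` Pow X. p ^ card Q * (1 - p) ^ (card (insert a X) - card Q) * f Q)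
      = p * subset_expect X p (\<lambda>Q. f (insert a Q))"
    unfolding subset_expect_def sum_distrib_left using assms
    by (subst sum.reindex[OF inj]) (auto intro!: sum.cong simp: card_insert_if finite_subset subset_iff)
  have without_a: "(\<Sum>Q\<in>Pow X. p ^ card Q * (1 - p) ^ (card (insert a X) - card Q) * f Q)
      = (1 - p) * subset_expect X p f"
    unfolding subset_expect_def sum_distrib_left using assms card_le
    by (intro sum.cong refl) (simp add: Suc_diff_le)
  have "Pow X \<inter> insert a ` Pow X = {}" using assms(2) by auto
  then show ?thesis
    unfolding subset_expect_def[of "insert a X"] Pow_insert using assms(1)
    by (simp add: sum.union_disjoint with_a without_a)
qed

lemma subset_expect_cong:
  "X = Y \<Longrightarrow> p = r \<Longrightarrow> (\<And>Q. Q \<subseteq> Y \<Longrightarrow> f Q = g Q) \<Longrightarrow>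
    subset_expect X p f = subset_expect Y r g"
  unfolding subset_expect_def by (rule sum.cong) auto

lemma subset_expect_add:
  "subset_expect X p (\<lambda>Q. f Q + g Q) = subset_expect X p f + subset_expect X p g"
  unfolding subset_expect_def by (simp add: algebra_simps sum.distrib)

lemma subset_expect_cmult: "subset_expect X p (\<lambda>Q. c * f Q) = c * subset_expect X p f"
  unfolding subset_expect_def by (simp add: algebra_simps sum_distrib_left)

lemma subset_expect_sum:
  "subset_expect X p (\<lambda>Q. \<Sum>k\<in>K. f k Q) = (\<Sum>k\<in>K. subset_expect X p (f k))"
  unfolding subset_expect_def by (simp add: sum_distrib_left sum.swap[of _ "Pow X"])

lemma subset_expect_swap:
  "subset_expect X p (\<lambda>Q. subset_expect Y r (f Q))
    = subset_expect Y r (\<lambda>S. subset_expect X p (\<lambda>Q. f Q S))"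
  unfolding subset_expect_def
  by (simp add: sum_distrib_left sum.swap[of _ "Pow X"] mult.assoc mult.left_commute)

lemma subset_expect_const [simp]: "finite X \<Longrightarrow> subset_expect X p (\<lambda>_. c) = c"
  by (induction X rule: finite_induct) (simp_all add: subset_expect_insert algebra_simps)

lemma subset_expect_mono:
  assumes "0 \<le> p" "p \<le> 1" "\<And>Q. Q \<subseteq> X \<Longrightarrow> f Q \<le> g Q"
  shows "subset_expect X p f \<le> subset_expect X p g"
  unfolding subset_expect_def using assms by (intro sum_mono mult_left_mono) auto

lemma subset_expect_abs_le:
  assumes "0 \<le> p" "p \<le> 1"
  shows "\<bar>subset_expect X p f\<bar> \<le> subset_expect X p (\<lambda>Q. \<bar>f Q\<bar>)"
  unfolding subset_expect_def using assms
  by (intro order.trans[OF sum_abs] sum_mono) (simp add: abs_mult)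

lemma subset_expect_union:
  assumes "finite A" "finite B" "A \<inter> B = {}"
  shows "subset_expect (A \<union> B) p f
    = subset_expect A p (\<lambda>Q1. subset_expect B p (\<lambda>Q2. f (Q1 \<union> Q2)))"
  using assms
proof (induction A arbitrary: f rule: finite_induct)
  case (insert a A)
  then have "subset_expect (insert a (A \<union> B)) p f
      = p * subset_expect (A \<union> B) p (\<lambda>Q. f (insert a Q)) + (1 - p) * subset_expect (A \<union> B) p f"
    by (intro subset_expect_insert) auto
  with insert show ?case by (simp add: subset_expect_insert)
qed simp

lemma subset_expect_sum_elements:
  assumes "finite X"
  shows "subset_expect X p (\<lambda>Q. \<Sum>j\<in>Q. c j) = p * (\<Sum>j\<in>X. c j)"
  using assms
proof (induction X rule: finite_induct)
  case (insert a X)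
  have "subset_expect X p (\<lambda>Q. \<Sum>j\<in>insert a Q. c j) = subset_expect X p (\<lambda>Q. c a + (\<Sum>j\<in>Q. c j))"
    using insert by (intro subset_expect_cong refl) (metis finite_subset subsetD sum.insert)
  with insert show ?case by (simp add: subset_expect_insert subset_expect_add algebra_simps)
qed simp

lemma subset_expect_mem_not_mem:
  assumes "finite X" "i \<in> X" "j \<in> X" "i \<noteq> j"
  shows "subset_expect X p (\<lambda>S. of_bool (i \<in> S \<and> j \<notin> S)) = p * (1 - p)"
proof -
  define Y where "Y = X - {i, j}"
  have X: "X = {i, j} \<union> Y" "finite Y" "{i, j} \<inter> Y = {}"
    using assms unfolding Y_def by auto
  have "subset_expect X p (\<lambda>S. of_bool (i \<in> S \<and> j \<notin> S))
      = subset_expect {i, j} p (\<lambda>Q1. subset_expect Y p (\<lambda>Q2. of_bool (i \<in> Q1 \<union> Q2 \<and> j \<notin> Q1 \<union> Q2)))"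
    unfolding X(1) using X by (intro subset_expect_union) auto
  also have "\<dots> = subset_expect {i, j} p (\<lambda>Q1. subset_expect Y p (\<lambda>_. of_bool (i \<in> Q1 \<and> j \<notin> Q1)))"
    using X by (intro subset_expect_cong) auto
  finally show ?thesis using assms(4) X(2) by (simp add: subset_expect_insert)
qed

lemma subset_expect_abs_le_sqrt:
  assumes "finite X" "0 \<le> p" "p \<le> 1"
  shows "subset_expect X p (\<lambda>Q. \<bar>f Q\<bar>) \<le> sqrt (subset_expect X p (\<lambda>Q. (f Q)\<^sup>2))"
proof -
  define m where "m = subset_expect X p (\<lambda>Q. \<bar>f Q\<bar>)"
  have "0 \<le> subset_expect X p (\<lambda>Q. (\<bar>f Q\<bar> - m)\<^sup>2)"
    using subset_expect_mono[OF assms(2,3), of X "\<lambda>_. 0"] assms(1) by simp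
  also have "\<dots> = subset_expect X p (\<lambda>Q. (f Q)\<^sup>2 + (- 2 * m) * \<bar>f Q\<bar> + m\<^sup>2)"
    by (intro subset_expect_cong refl) (simp add: power2_eq_square algebra_simps)
  also have "\<dots> = subset_expect X p (\<lambda>Q. (f Q)\<^sup>2) - m\<^sup>2"
    using assms(1) unfolding subset_expect_add subset_expect_cmult subset_expect_const
    by (simp add: m_def power2_eq_square)
  finally have "m\<^sup>2 \<le> subset_expect X p (\<lambda>Q. (f Q)\<^sup>2)" by simp
  then show ?thesis unfolding m_def by (rule real_le_rsqrt)
qed

lemma subset_expect2_insert:
  assumes "finite X" "a \<notin> X"
  shows "subset_expect (insert a X) p (\<lambda>Q. subset_expect (insert a X) p (f Q)) =
      p * p * subset_expect X p (\<lambda>Q. subset_expect X p (\<lambda>Q'. f (insert a Q) (insert a Q')))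
    + p * (1 - p) * subset_expect X p (\<lambda>Q. subset_expect X p (\<lambda>Q'. f (insert a Q) Q'))
    + (1 - p) * p * subset_expect X p (\<lambda>Q. subset_expect X p (\<lambda>Q'. f Q (insert a Q')))
    + (1 - p) * (1 - p) * subset_expect X p (\<lambda>Q. subset_expect X p (f Q))"
  by (simp only: subset_expect_insert[OF assms] subset_expect_add subset_expect_cmult)
     (simp add: algebra_simps)

lemma subset_expect2_abs_le_sqrt:
  assumes "finite X" "0 \<le> p" "p \<le> 1"
  shows "subset_expect X p (\<lambda>Q. subset_expect X p (\<lambda>Q'. \<bar>f Q Q'\<bar>))
    \<le> sqrt (subset_expect X p (\<lambda>Q. subset_expect X p (\<lambda>Q'. (f Q Q')\<^sup>2)))"
proof -
  have nonneg: "0 \<le> subset_expect X p (\<lambda>Q'. (f Q Q')\<^sup>2)" for Q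
    using subset_expect_mono[OF assms(2,3), of X "\<lambda>_. 0"] assms(1) by simp
  have "subset_expect X p (\<lambda>Q. subset_expect X p (\<lambda>Q'. \<bar>f Q Q'\<bar>))
      \<le> subset_expect X p (\<lambda>Q. sqrt (subset_expect X p (\<lambda>Q'. (f Q Q')\<^sup>2)))"
    using assms by (intro subset_expect_mono subset_expect_abs_le_sqrt)
  also have "\<dots> \<le> sqrt (subset_expect X p (\<lambda>Q. (sqrt (subset_expect X p (\<lambda>Q'. (f Q Q')\<^sup>2)))\<^sup>2))"
    using subset_expect_abs_le_sqrt[OF assms, of "\<lambda>Q. sqrt (subset_expect X p (\<lambda>Q'. (f Q Q')\<^sup>2))"]
      nonneg by (simp add: abs_of_nonneg)
  finally show ?thesis using nonneg by simp
qed

section \<open>Symmetrisation and contraction\<close>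

definition centred_sum :: "'a set \<Rightarrow> real \<Rightarrow> 'a set \<Rightarrow> ('a \<Rightarrow> real) \<Rightarrow> real" where
  "centred_sum X p Q g = (\<Sum>i\<in>X. (of_bool (i \<in> Q) - p) * g i)"

definition symm_sum :: "'a set \<Rightarrow> 'a set \<Rightarrow> 'a set \<Rightarrow> ('a \<Rightarrow> real) \<Rightarrow> real" where
  "symm_sum X Q Q' g = (\<Sum>i\<in>X. (of_bool (i \<in> Q) - of_bool (i \<in> Q')) * g i)"

lemma centred_sum_empty [simp]: "centred_sum {} p Q g = 0"
  by (simp add: centred_sum_def)

lemma centred_sum_insert [simp]:
  "finite X \<Longrightarrow> a \<notin> X \<Longrightarrow>
    centred_sum (insert a X) p Q g = (of_bool (a \<in> Q) - p) * g a + centred_sum X p Q g"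
  by (simp add: centred_sum_def)

lemma centred_sum_insert_set [simp]:
  "a \<notin> X \<Longrightarrow> centred_sum X p (insert a Q) g = centred_sum X p Q g"
  unfolding centred_sum_def by (intro sum.cong) auto

lemma symm_sum_empty [simp]: "symm_sum {} Q Q' g = 0"
  by (simp add: symm_sum_def)

lemma symm_sum_insert [simp]:
  "finite X \<Longrightarrow> a \<notin> X \<Longrightarrow>
    symm_sum (insert a X) Q Q' g = (of_bool (a \<in> Q) - of_bool (a \<in> Q')) * g a + symm_sum X Q Q' g"
  by (simp add: symm_sum_def)

lemma symm_sum_insert_set [simp]:
  "a \<notin> X \<Longrightarrow> symm_sum X (insert a Q) Q' g = symm_sum X Q Q' g"
  "a \<notin> X \<Longrightarrow> symm_sum X Q (insert a Q') g = symm_sum X Q Q' g"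
  unfolding symm_sum_def by (auto intro: sum.cong)

lemma symm_sum_insert_cases:
  assumes "finite X" "a \<notin> X" "Q \<subseteq> X" "Q' \<subseteq> X"
  shows "symm_sum (insert a X) (insert a Q) (insert a Q') g = symm_sum X Q Q' g"
    and "symm_sum (insert a X) (insert a Q) Q' g = symm_sum X Q Q' g + g a"
    and "symm_sum (insert a X) Q (insert a Q') g = symm_sum X Q Q' g - g a"
    and "symm_sum (insert a X) Q Q' g = symm_sum X Q Q' g"
proof -
  have "a \<notin> Q" "a \<notin> Q'" using assms by auto
  with assms(1,2) show "symm_sum (insert a X) (insert a Q) (insert a Q') g = symm_sum X Q Q' g"
    and "symm_sum (insert a X) (insert a Q) Q' g = symm_sum X Q Q' g + g a"
    and "symm_sum (insert a X) Q (insert a Q') g = symm_sum X Q Q' g - g a"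
    and "symm_sum (insert a X) Q Q' g = symm_sum X Q Q' g"
    by simp_all
qed

lemma symm_sum_second_moment:
  assumes "finite X"
  shows "subset_expect X p (\<lambda>Q. subset_expect X p (\<lambda>Q'. (c + symm_sum X Q Q' m)\<^sup>2))
    = c\<^sup>2 + 2 * p * (1 - p) * (\<Sum>i\<in>X. (m i)\<^sup>2)"
  using assms
proof (induction X arbitrary: c rule: finite_induct)
  case (insert a X)
  have first_coordinate: "subset_expect (insert a X) p (\<lambda>Q. subset_expect (insert a X) p
      (\<lambda>Q'. (c + symm_sum (insert a X) Q Q' m)\<^sup>2))
    = p * p * subset_expect X p (\<lambda>Q. subset_expect X p (\<lambda>Q'. (c + symm_sum X Q Q' m)\<^sup>2))
    + p * (1 - p) * subset_expect X p (\<lambda>Q. subset_expect X p (\<lambda>Q'. ((c + m a) + symm_sum X Q Q' m)\<^sup>2))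
    + (1 - p) * p * subset_expect X p (\<lambda>Q. subset_expect X p (\<lambda>Q'. ((c - m a) + symm_sum X Q Q' m)\<^sup>2))
    + (1 - p) * (1 - p) * subset_expect X p (\<lambda>Q. subset_expect X p (\<lambda>Q'. (c + symm_sum X Q Q' m)\<^sup>2))"
    unfolding subset_expect2_insert[OF insert(1,2)] using insert(1,2)
    by (intro arg_cong2[where f="(+)"] arg_cong2[where f="(*)"] refl subset_expect_cong)
       (auto simp: subset_iff algebra_simps)
  show ?case
    unfolding first_coordinate insert.IH using insert(1,2) by (simp add: algebra_simps power2_eq_square)
qed simp

lemma expect_abs_symm_sum_le:
  assumes "finite R" "0 \<le> p" "p \<le> 1"
  shows "subset_expect R p (\<lambda>Q. subset_expect R p (\<lambda>Q'. \<bar>symm_sum R Q Q' m\<bar>))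
    \<le> 2 * sqrt p * sqrt (\<Sum>i\<in>R. (m i)\<^sup>2)"
proof -
  have "subset_expect R p (\<lambda>Q. subset_expect R p (\<lambda>Q'. \<bar>symm_sum R Q Q' m\<bar>))
      \<le> sqrt (2 * p * (1 - p) * (\<Sum>i\<in>R. (m i)\<^sup>2))"
    using subset_expect2_abs_le_sqrt[OF assms, of "\<lambda>Q Q'. symm_sum R Q Q' m"] symm_sum_second_moment[OF assms(1), of p 0 m]
    by simp
  also have "\<dots> \<le> sqrt (4 * p * (\<Sum>i\<in>R. (m i)\<^sup>2))"
    using assms mult_left_le[of "1 - p" "2 * p"]
    by (intro real_sqrt_le_mono mult_right_mono) (auto intro: sum_nonneg)
  also have "\<dots> = 2 * sqrt p * sqrt (\<Sum>i\<in>R. (m i)\<^sup>2)"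
    by (simp add: real_sqrt_mult)
  finally show ?thesis .
qed

lemma Max_contraction_step:
  fixes v s :: "'j \<Rightarrow> real"
  assumes S: "finite S" "S \<noteq> {}" and p: "0 \<le> p" "p \<le> 1"
    and lip: "\<And>x y. \<bar>\<phi> x - \<phi> y\<bar> \<le> \<bar>x - y\<bar>"
  shows "p * (MAX J\<in>S. v J + (1 - p) * \<phi> (s J)) + (1 - p) * (MAX J\<in>S. v J - p * \<phi> (s J))
    \<le> p * p * (MAX J\<in>S. v J) + p * (1 - p) * (MAX J\<in>S. v J + s J)
      + (1 - p) * p * (MAX J\<in>S. v J - s J) + (1 - p) * (1 - p) * (MAX J\<in>S. v J)"
proof -
  obtain J1 where J1: "J1 \<in> S" "(MAX J\<in>S. v J + (1 - p) * \<phi> (s J)) = v J1 + (1 - p) * \<phi> (s J1)"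
    by (rule obtains_MAX[OF S])
  obtain J2 where J2: "J2 \<in> S" "(MAX J\<in>S. v J - p * \<phi> (s J)) = v J2 - p * \<phi> (s J2)"
    by (rule obtains_MAX[OF S])
  have le_Max: "g J \<le> (MAX J\<in>S. g J)" if "J \<in> S" for g and J :: 'j
    using S that by (intro Max_ge) auto
  \<comment> \<open>the cross terms pair the two maximisers, in the order given by the sign of \<open>s J1 - s J2\<close>\<close>
  have cross: "v J1 + v J2 + \<bar>s J1 - s J2\<bar> \<le> (MAX J\<in>S. v J + s J) + (MAX J\<in>S. v J - s J)"
  proof (cases "s J2 \<le> s J1")
    case True
    then have "\<bar>s J1 - s J2\<bar> = s J1 - s J2" by simp
    with le_Max[OF J1(1), of "\<lambda>J. v J + s J"] le_Max[OF J2(1), of "\<lambda>J. v J - s J"]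
    show ?thesis by linarith
  next
    case False
    then have "\<bar>s J1 - s J2\<bar> = s J2 - s J1" by simp
    with le_Max[OF J2(1), of "\<lambda>J. v J + s J"] le_Max[OF J1(1), of "\<lambda>J. v J - s J"]
    show ?thesis by linarith
  qed
  have "\<phi> (s J1) - \<phi> (s J2) \<le> \<bar>s J1 - s J2\<bar>" using lip[of "s J1" "s J2"] by linarith
  then have "p * (1 - p) * (v J1 + v J2 + (\<phi> (s J1) - \<phi> (s J2)))
      \<le> p * (1 - p) * ((MAX J\<in>S. v J + s J) + (MAX J\<in>S. v J - s J))"
    using cross p by (intro mult_left_mono) auto
  moreover have "p * p * v J1 \<le> p * p * (MAX J\<in>S. v J)"
    using le_Max[OF J1(1)] by (intro mult_left_mono) auto
  moreover have "(1 - p) * (1 - p) * v J2 \<le> (1 - p) * (1 - p) * (MAX J\<in>S. v J)"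
    using le_Max[OF J2(1)] p by (intro mult_left_mono) auto
  ultimately show ?thesis unfolding J1(2) J2(2) by (simp add: algebra_simps)
qed

lemma contraction_principle:
  fixes u :: "'j \<Rightarrow> real" and t :: "'j \<Rightarrow> 'a \<Rightarrow> real"
  assumes "finite X" and S: "finite S" "S \<noteq> {}" and p: "0 \<le> p" "p \<le> 1"
    and lip: "\<And>x y. \<bar>\<phi> x - \<phi> y\<bar> \<le> \<bar>x - y\<bar>"
  shows "subset_expect X p (\<lambda>Q. MAX J\<in>S. u J + centred_sum X p Q (\<lambda>i. \<phi> (t J i)))
    \<le> subset_expect X p (\<lambda>Q. subset_expect X p (\<lambda>Q'. MAX J\<in>S. u J + symm_sum X Q Q' (t J)))"
  using assms(1)
proof (induction X arbitrary: u rule: finite_induct)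
  case (insert a X)
  note X = insert(1,2)
  have not_in: "a \<notin> Q" if "Q \<subseteq> X" for Q using that X by auto
  have "subset_expect (insert a X) p (\<lambda>Q. MAX J\<in>S. u J + centred_sum (insert a X) p Q (\<lambda>i. \<phi> (t J i)))
    = p * subset_expect X p (\<lambda>Q. MAX J\<in>S. (u J + (1 - p) * \<phi> (t J a)) + centred_sum X p Q (\<lambda>i. \<phi> (t J i)))
      + (1 - p) * subset_expect X p (\<lambda>Q. MAX J\<in>S. (u J - p * \<phi> (t J a)) + centred_sum X p Q (\<lambda>i. \<phi> (t J i)))"
    unfolding subset_expect_insert[OF X] using X not_in
    by (intro arg_cong2[where f="(+)"] arg_cong2[where f="(*)"] refl subset_expect_cong)
       (simp_all add: algebra_simps)
  also have "\<dots> \<le> p * subset_expect X p (\<lambda>Q. subset_expect X p (\<lambda>Q'.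
        MAX J\<in>S. (u J + (1 - p) * \<phi> (t J a)) + symm_sum X Q Q' (t J)))
      + (1 - p) * subset_expect X p (\<lambda>Q. subset_expect X p (\<lambda>Q'.
        MAX J\<in>S. (u J - p * \<phi> (t J a)) + symm_sum X Q Q' (t J)))"
    using p by (intro add_mono mult_left_mono insert.IH) auto
  also have "\<dots> = subset_expect X p (\<lambda>Q. subset_expect X p (\<lambda>Q'.
        p * (MAX J\<in>S. (u J + symm_sum X Q Q' (t J)) + (1 - p) * \<phi> (t J a))
      + (1 - p) * (MAX J\<in>S. (u J + symm_sum X Q Q' (t J)) - p * \<phi> (t J a))))"
  proof -
    have "(MAX J\<in>S. (u J + c * \<phi> (t J a)) + symm_sum X Q Q' (t J))
        = (MAX J\<in>S. (u J + symm_sum X Q Q' (t J)) + c * \<phi> (t J a))" for c Q Q'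
      by (simp add: ac_simps)
    moreover have "(MAX J\<in>S. (u J - p * \<phi> (t J a)) + symm_sum X Q Q' (t J))
        = (MAX J\<in>S. (u J + symm_sum X Q Q' (t J)) - p * \<phi> (t J a))" for Q Q'
      by (simp add: algebra_simps)
    ultimately show ?thesis by (simp only: subset_expect_add subset_expect_cmult)
  qed
  also have "\<dots> \<le> subset_expect X p (\<lambda>Q. subset_expect X p (\<lambda>Q'.
        p * p * (MAX J\<in>S. u J + symm_sum X Q Q' (t J))
      + p * (1 - p) * (MAX J\<in>S. (u J + symm_sum X Q Q' (t J)) + t J a)
      + (1 - p) * p * (MAX J\<in>S. (u J + symm_sum X Q Q' (t J)) - t J a)
      + (1 - p) * (1 - p) * (MAX J\<in>S. u J + symm_sum X Q Q' (t J))))"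
    using p by (intro subset_expect_mono Max_contraction_step[OF S p lip]) auto
  also have "\<dots> = subset_expect (insert a X) p (\<lambda>Q. subset_expect (insert a X) p (\<lambda>Q'.
        MAX J\<in>S. u J + symm_sum (insert a X) Q Q' (t J)))"
    using symm_sum_insert_cases[OF X]
    by (simp only: subset_expect2_insert[OF X] subset_expect_add subset_expect_cmult
        add.assoc add_diff_eq cong: subset_expect_cong)
  finally show ?case .
qed simp

section \<open>Cut norms of rectangular blocks\<close>

definition cut_norm_on :: "'a set \<Rightarrow> 'b set \<Rightarrow> ('a \<Rightarrow> 'b \<Rightarrow> real) \<Rightarrow> real" where
  "cut_norm_on R T B = Max {\<bar>\<Sum>i\<in>I. \<Sum>j\<in>J. B i j\<bar> | I J. I \<subseteq> R \<and> J \<subseteq> T}"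

lemma cut_norm_eq_cut_norm_on: "cut_norm S B = cut_norm_on S S B"
  unfolding cut_norm_def cut_norm_on_def ..

lemma cut_norm_on_image:
  "{\<bar>\<Sum>i\<in>I. \<Sum>j\<in>J. B i j\<bar> | I J. I \<subseteq> R \<and> J \<subseteq> T}
    = (\<lambda>(I, J). \<bar>\<Sum>i\<in>I. \<Sum>j\<in>J. B i j\<bar>) ` (Pow R \<times> Pow T)"
  by auto

lemma abs_sum_le_cut_norm_on:
  assumes "finite R" "finite T" "I \<subseteq> R" "J \<subseteq> T"
  shows "\<bar>\<Sum>i\<in>I. \<Sum>j\<in>J. B i j\<bar> \<le> cut_norm_on R T B"
  unfolding cut_norm_on_def cut_norm_on_image using assms by (intro Max_ge) auto

lemma cut_norm_on_le:
  assumes "finite R" "finite T" "\<And>I J. I \<subseteq> R \<Longrightarrow> J \<subseteq> T \<Longrightarrow> \<bar>\<Sum>i\<in>I. \<Sum>j\<in>J. B i j\<bar> \<le> c"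
  shows "cut_norm_on R T B \<le> c"
  unfolding cut_norm_on_def cut_norm_on_image using assms by (intro Max.boundedI) auto

lemma cut_norm_on_nonneg: "finite R \<Longrightarrow> finite T \<Longrightarrow> 0 \<le> cut_norm_on R T B"
  using abs_sum_le_cut_norm_on[of R T "{}" "{}" B] by simp

lemma cut_norm_on_mono:
  assumes "finite R'" "finite T'" "R \<subseteq> R'" "T \<subseteq> T'"
  shows "cut_norm_on R T B \<le> cut_norm_on R' T' B"
  using assms by (intro cut_norm_on_le abs_sum_le_cut_norm_on) (auto intro: finite_subset)

lemma cut_norm_on_transpose:
  assumes "finite R" "finite T"
  shows "cut_norm_on T R (\<lambda>j i. B i j) = cut_norm_on R T B"
proof -
  have "cut_norm_on R T B \<le> cut_norm_on T R (\<lambda>j i. B i j)"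
    if "finite R" "finite T" for R T and B :: "'c \<Rightarrow> 'd \<Rightarrow> real"
    using that by (intro cut_norm_on_le) (metis abs_sum_le_cut_norm_on sum.swap)+
  from this[OF assms, of B] this[OF assms(2,1), of "\<lambda>j i. B i j"] show ?thesis by simp
qed

lemma cut_norm_on_uminus: "cut_norm_on R T (\<lambda>i j. - B i j) = cut_norm_on R T B"
  unfolding cut_norm_on_def by (simp add: sum_negf)

lemma cut_norm_on_add_le:
  assumes "finite R" "finite T"
  shows "cut_norm_on R T (\<lambda>i j. B i j + B' i j) \<le> cut_norm_on R T B + cut_norm_on R T B'"
proof (rule cut_norm_on_le[OF assms])
  fix I J assume "I \<subseteq> R" "J \<subseteq> T"
  then have "\<bar>\<Sum>i\<in>I. \<Sum>j\<in>J. B i j\<bar> + \<bar>\<Sum>i\<in>I. \<Sum>j\<in>J. B' i j\<bar> \<le> cut_norm_on R T B + cut_norm_on R T B'"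
    using assms by (intro add_mono abs_sum_le_cut_norm_on)
  then show "\<bar>\<Sum>i\<in>I. \<Sum>j\<in>J. B i j + B' i j\<bar> \<le> cut_norm_on R T B + cut_norm_on R T B'"
    by (simp add: sum.distrib)
qed

definition col_norm_on :: "'a set \<Rightarrow> 'b set \<Rightarrow> ('a \<Rightarrow> 'b \<Rightarrow> real) \<Rightarrow> real" where
  "col_norm_on R T M = (\<Sum>j\<in>T. sqrt (\<Sum>i\<in>R. (M i j)\<^sup>2))"

lemma col_norm_eq_col_norm_on: "col_norm n A = col_norm_on {1..n} {1..n} A"
  unfolding col_norm_def col_norm_on_def ..

lemma col_norm_on_nonneg: "0 \<le> col_norm_on R T M"
  unfolding col_norm_on_def by (intro sum_nonneg real_sqrt_ge_zero) auto

lemma col_norm_on_mono: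
  assumes "finite R" "finite T" "R' \<subseteq> R" "T' \<subseteq> T"
    and "\<And>i j. i \<in> R' \<Longrightarrow> j \<in> T' \<Longrightarrow> (M' i j)\<^sup>2 \<le> (M i j)\<^sup>2"
  shows "col_norm_on R' T' M' \<le> col_norm_on R T M"
proof -
  have "(\<Sum>i\<in>R'. (M' i j)\<^sup>2) \<le> (\<Sum>i\<in>R. (M i j)\<^sup>2)" if "j \<in> T'" for j
  proof -
    have "(\<Sum>i\<in>R'. (M' i j)\<^sup>2) \<le> (\<Sum>i\<in>R'. (M i j)\<^sup>2)"
      using assms(5) that by (intro sum_mono) auto
    also have "\<dots> \<le> (\<Sum>i\<in>R. (M i j)\<^sup>2)"
      using assms(1,3) by (intro sum_mono2) auto
    finally show ?thesis .
  qed
  then have "col_norm_on R' T' M' \<le> (\<Sum>j\<in>T'. sqrt (\<Sum>i\<in>R. (M i j)\<^sup>2))"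
    unfolding col_norm_on_def by (intro sum_mono real_sqrt_le_mono)
  also have "\<dots> \<le> col_norm_on R T M"
    unfolding col_norm_on_def using assms(2,4) by (intro sum_mono2) (auto intro: sum_nonneg)
  finally show ?thesis .
qed

section \<open>Sampling the rows or columns of a block\<close>

lemma sum_positive_parts_le_cut_norm_on:
  assumes "finite R" "finite J0" "J \<subseteq> J0"
  shows "(\<Sum>i\<in>R. max 0 (\<Sum>j\<in>J. M i j)) \<le> cut_norm_on R J0 M"
proof -
  have "(\<Sum>i\<in>R. max 0 (\<Sum>j\<in>J. M i j)) = (\<Sum>i\<in>{i\<in>R. 0 \<le> (\<Sum>j\<in>J. M i j)}. \<Sum>j\<in>J. M i j)"
    using assms(1) by (simp add: sum.inter_filter[symmetric] max_def)
  also have "\<dots> \<le> cut_norm_on R J0 M"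
    using assms abs_sum_le_cut_norm_on[of R J0 "{i\<in>R. 0 \<le> (\<Sum>j\<in>J. M i j)}" J M] by auto
  finally show ?thesis .
qed

lemma Max_symm_sum_le_sum_abs:
  assumes "finite J0"
  shows "(MAX J\<in>Pow J0. symm_sum R Q Q' (\<lambda>i. \<Sum>j\<in>J. M i j))
    \<le> (\<Sum>j\<in>J0. \<bar>symm_sum R Q Q' (\<lambda>i. M i j)\<bar>)"
proof (rule Max.boundedI)
  fix x assume "x \<in> (\<lambda>J. symm_sum R Q Q' (\<lambda>i. \<Sum>j\<in>J. M i j)) ` Pow J0"
  then obtain J where J: "J \<subseteq> J0" and x: "x = symm_sum R Q Q' (\<lambda>i. \<Sum>j\<in>J. M i j)" by auto
  have "x = (\<Sum>j\<in>J. symm_sum R Q Q' (\<lambda>i. M i j))"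
    unfolding x symm_sum_def by (simp add: sum_distrib_left sum.swap[of _ R])
  also have "\<dots> \<le> (\<Sum>j\<in>J0. \<bar>symm_sum R Q Q' (\<lambda>i. M i j)\<bar>)"
    using J assms by (intro order.trans[OF sum_mono sum_mono2]) auto
  finally show "x \<le> \<dots>" .
qed (use assms in auto)

lemma expect_Max_positive_row_sums_le:
  assumes R: "finite R" and J0: "finite J0" and p: "0 \<le> p" "p \<le> 1"
  shows "subset_expect R p (\<lambda>Q. MAX J\<in>Pow J0. \<Sum>i\<in>Q. max 0 (\<Sum>j\<in>J. M i j))
    \<le> p * cut_norm_on R J0 M + 2 * sqrt p * col_norm_on R J0 M"
proof -
  define t where "t J i = (\<Sum>j\<in>J. M i j)" for J i
  have S: "finite (Pow J0)" "Pow J0 \<noteq> {}" using J0 by auto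
  have lip: "\<bar>max 0 x - max 0 y\<bar> \<le> \<bar>x - y\<bar>" for x y :: real by auto
  have centre: "(MAX J\<in>Pow J0. \<Sum>i\<in>Q. max 0 (t J i))
      \<le> p * cut_norm_on R J0 M + (MAX J\<in>Pow J0. centred_sum R p Q (\<lambda>i. max 0 (t J i)))"
    if "Q \<subseteq> R" for Q
  proof (rule Max.boundedI)
    fix x assume "x \<in> (\<lambda>J. \<Sum>i\<in>Q. max 0 (t J i)) ` Pow J0"
    then obtain J where J: "J \<subseteq> J0" and x: "x = (\<Sum>i\<in>Q. max 0 (t J i))" by auto
    have "x = p * (\<Sum>i\<in>R. max 0 (t J i)) + centred_sum R p Q (\<lambda>i. max 0 (t J i))"
      using R that unfolding x centred_sum_def
      by (simp add: algebra_simps sum_distrib_left sum_subtractf Int_absorb1 Int_def[symmetric])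
    also have "\<dots> \<le> p * cut_norm_on R J0 M + (MAX J\<in>Pow J0. centred_sum R p Q (\<lambda>i. max 0 (t J i)))"
      using sum_positive_parts_le_cut_norm_on[OF R J0 J] p J S unfolding t_def
      by (intro add_mono mult_left_mono Max_ge) auto
    finally show "x \<le> \<dots>" .
  qed (use S in auto)
  have "subset_expect R p (\<lambda>Q. MAX J\<in>Pow J0. \<Sum>i\<in>Q. max 0 (t J i))
      \<le> subset_expect R p (\<lambda>Q. p * cut_norm_on R J0 M
        + (MAX J\<in>Pow J0. centred_sum R p Q (\<lambda>i. max 0 (t J i))))"
    using p centre by (intro subset_expect_mono)
  also have "\<dots> = p * cut_norm_on R J0 M
        + subset_expect R p (\<lambda>Q. MAX J\<in>Pow J0. centred_sum R p Q (\<lambda>i. max 0 (t J i)))"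
    using R by (simp only: subset_expect_add subset_expect_const)
  also have "\<dots> \<le> p * cut_norm_on R J0 M
        + subset_expect R p (\<lambda>Q. subset_expect R p (\<lambda>Q'. MAX J\<in>Pow J0. symm_sum R Q Q' (t J)))"
    using contraction_principle[OF R S p lip, of "\<lambda>_. 0" t] by simp
  also have "\<dots> \<le> p * cut_norm_on R J0 M
        + (\<Sum>j\<in>J0. subset_expect R p (\<lambda>Q. subset_expect R p (\<lambda>Q'. \<bar>symm_sum R Q Q' (\<lambda>i. M i j)\<bar>)))"
    unfolding t_def subset_expect_sum[symmetric] using p Max_symm_sum_le_sum_abs[OF J0]
    by (intro add_left_mono subset_expect_mono)
  also have "\<dots> \<le> p * cut_norm_on R J0 M + 2 * sqrt p * col_norm_on R J0 M"
    unfolding col_norm_on_def sum_distrib_left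
    using expect_abs_symm_sum_le[OF R p] by (intro add_left_mono sum_mono) auto
  finally show ?thesis unfolding t_def .
qed

lemma cut_norm_on_le_positive_parts:
  assumes Q: "finite Q" and J0: "finite J0"
  shows "cut_norm_on Q J0 M
    \<le> (MAX J\<in>Pow J0. \<Sum>i\<in>Q. max 0 (\<Sum>j\<in>J. M i j))
      + (MAX J\<in>Pow J0. \<Sum>i\<in>Q. max 0 (\<Sum>j\<in>J. - M i j))"
proof -
  have bound: "(\<Sum>i\<in>I. \<Sum>j\<in>J. N i j) \<le> (MAX J\<in>Pow J0. \<Sum>i\<in>Q. max 0 (\<Sum>j\<in>J. N i j))"
    if "I \<subseteq> Q" "J \<subseteq> J0" for I J and N :: "'a \<Rightarrow> 'b \<Rightarrow> real"
  proof -
    have "(\<Sum>i\<in>I. \<Sum>j\<in>J. N i j) \<le> (\<Sum>i\<in>I. max 0 (\<Sum>j\<in>J. N i j))"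
      by (intro sum_mono) auto
    also have "\<dots> \<le> (\<Sum>i\<in>Q. max 0 (\<Sum>j\<in>J. N i j))"
      using that Q by (intro sum_mono2) auto
    also have "\<dots> \<le> (MAX J\<in>Pow J0. \<Sum>i\<in>Q. max 0 (\<Sum>j\<in>J. N i j))"
      using that J0 by (intro Max_ge) auto
    finally show ?thesis .
  qed
  have nonneg: "0 \<le> (MAX J\<in>Pow J0. \<Sum>i\<in>Q. max 0 (\<Sum>j\<in>J. N i j))" for N :: "'a \<Rightarrow> 'b \<Rightarrow> real"
    using bound[of "{}" "{}" N] by simp
  show ?thesis
  proof (rule cut_norm_on_le[OF Q J0])
    fix I J assume "I \<subseteq> Q" "J \<subseteq> J0"
    then show "\<bar>\<Sum>i\<in>I. \<Sum>j\<in>J. M i j\<bar> \<le> (MAX J\<in>Pow J0. \<Sum>i\<in>Q. max 0 (\<Sum>j\<in>J. M i j))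
      + (MAX J\<in>Pow J0. \<Sum>i\<in>Q. max 0 (\<Sum>j\<in>J. - M i j))"
      using bound[of I J M] bound[of I J "\<lambda>i j. - M i j"] nonneg[of M] nonneg[of "\<lambda>i j. - M i j"]
      by (simp add: sum_negf abs_le_iff)
  qed
qed

lemma expect_cut_norm_on_row_sample:
  assumes R: "finite R" and J0: "finite J0" and p: "0 \<le> p" "p \<le> 1"
  shows "subset_expect R p (\<lambda>Q. cut_norm_on Q J0 M)
    \<le> 2 * p * cut_norm_on R J0 M + 4 * sqrt p * col_norm_on R J0 M"
proof -
  have "subset_expect R p (\<lambda>Q. cut_norm_on Q J0 M)
      \<le> subset_expect R p (\<lambda>Q. MAX J\<in>Pow J0. \<Sum>i\<in>Q. max 0 (\<Sum>j\<in>J. M i j))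
        + subset_expect R p (\<lambda>Q. MAX J\<in>Pow J0. \<Sum>i\<in>Q. max 0 (\<Sum>j\<in>J. - M i j))"
    unfolding subset_expect_add[symmetric] using R J0 p
    by (intro subset_expect_mono cut_norm_on_le_positive_parts) (auto intro: rev_finite_subset[OF R])
  also have "\<dots> \<le> (p * cut_norm_on R J0 M + 2 * sqrt p * col_norm_on R J0 M)
      + (p * cut_norm_on R J0 (\<lambda>i j. - M i j) + 2 * sqrt p * col_norm_on R J0 (\<lambda>i j. - M i j))"
    by (intro add_mono expect_Max_positive_row_sums_le[OF R J0 p])
  also have "\<dots> = 2 * p * cut_norm_on R J0 M + 4 * sqrt p * col_norm_on R J0 M"
    by (simp add: cut_norm_on_uminus col_norm_on_def)
  finally show ?thesis .
qed

lemma expect_cut_norm_on_product_sample: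
  assumes S: "finite S" and T: "finite T" and p: "0 \<le> p" "p \<le> 1"
  shows "subset_expect S p (\<lambda>Q1. subset_expect T p (\<lambda>Q2. cut_norm_on Q1 Q2 B))
    \<le> 4 * p\<^sup>2 * cut_norm_on S T B
      + 8 * (p * sqrt p) * col_norm_on T S (\<lambda>j i. B i j) + 4 * (p * sqrt p) * col_norm_on S T B"
proof -
  have "subset_expect S p (\<lambda>Q1. subset_expect T p (\<lambda>Q2. cut_norm_on Q1 Q2 B))
      = subset_expect T p (\<lambda>Q2. subset_expect S p (\<lambda>Q1. cut_norm_on Q1 Q2 B))"
    by (rule subset_expect_swap)
  also have "\<dots> \<le> subset_expect T p (\<lambda>Q2. 2 * p * cut_norm_on S Q2 B + 4 * sqrt p * col_norm_on S Q2 B)"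
    using S T p by (intro subset_expect_mono expect_cut_norm_on_row_sample) (auto intro: rev_finite_subset[OF T])
  also have "\<dots> = 2 * p * subset_expect T p (\<lambda>Q2. cut_norm_on Q2 S (\<lambda>j i. B i j))
      + 4 * (p * sqrt p) * col_norm_on S T B"
  proof -
    have "subset_expect T p (\<lambda>Q2. cut_norm_on S Q2 B)
        = subset_expect T p (\<lambda>Q2. cut_norm_on Q2 S (\<lambda>j i. B i j))"
      using S by (intro subset_expect_cong refl cut_norm_on_transpose[symmetric]) (auto intro: rev_finite_subset[OF T])
    moreover have "subset_expect T p (\<lambda>Q2. col_norm_on S Q2 B) = p * col_norm_on S T B"
      unfolding col_norm_on_def using subset_expect_sum_elements[OF T] .
    ultimately show ?thesis
      by (simp add: subset_expect_add subset_expect_cmult)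
  qed
  also have "\<dots> \<le> 2 * p * (2 * p * cut_norm_on S T B + 4 * sqrt p * col_norm_on T S (\<lambda>j i. B i j))
      + 4 * (p * sqrt p) * col_norm_on S T B"
    using expect_cut_norm_on_row_sample[OF T S p, of "\<lambda>j i. B i j"] cut_norm_on_transpose[OF S T, of B] p
    by (intro add_right_mono mult_left_mono) simp_all
  finally show ?thesis by (simp add: algebra_simps power2_eq_square)
qed

section \<open>Decoupling and the diagonal\<close>

lemma sum_eq_4_expect_split_sum:
  assumes X: "finite X" and I: "I \<subseteq> X" and J: "J \<subseteq> X" and diag: "\<And>i. i \<in> I \<inter> J \<Longrightarrow> B i i = 0"
  shows "(\<Sum>i\<in>I. \<Sum>j\<in>J. B i j) = 4 * subset_expect X (1/2) (\<lambda>S. \<Sum>i\<in>I \<inter> S. \<Sum>j\<in>J - S. B i j)"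
proof -
  have fin: "finite I" "finite J" using I J by (auto intro: rev_finite_subset[OF X])
  \<comment> \<open>an off-diagonal pair \<open>(i, j)\<close> lands in \<open>S \<times> (X - S)\<close> with probability \<open>1/4\<close>\<close>
  have "(\<Sum>i\<in>I. \<Sum>j\<in>J. B i j)
      = (\<Sum>i\<in>I. \<Sum>j\<in>J. 4 * subset_expect X (1/2) (\<lambda>S. B i j * of_bool (i \<in> S \<and> j \<notin> S)))"
  proof (intro sum.cong refl)
    fix i j assume ij: "i \<in> I" "j \<in> J"
    then have "i \<in> X" "j \<in> X" using I J by auto
    then show "B i j = 4 * subset_expect X (1/2) (\<lambda>S. B i j * of_bool (i \<in> S \<and> j \<notin> S))"
      using ij diag subset_expect_mem_not_mem[OF X] X by (cases "i = j") (auto simp: subset_expect_cmult)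
  qed
  also have "\<dots> = 4 * subset_expect X (1/2) (\<lambda>S. \<Sum>i\<in>I. \<Sum>j\<in>J. B i j * of_bool (i \<in> S \<and> j \<notin> S))"
    by (simp only: subset_expect_sum subset_expect_cmult sum_distrib_left)
  also have "\<dots> = 4 * subset_expect X (1/2) (\<lambda>S. \<Sum>i\<in>I \<inter> S. \<Sum>j\<in>J - S. B i j)"
  proof -
    have "(\<Sum>i\<in>I. \<Sum>j\<in>J. B i j * of_bool (i \<in> S \<and> j \<notin> S))
        = (\<Sum>i\<in>I. of_bool (i \<in> S) * (\<Sum>j\<in>J. of_bool (j \<notin> S) * B i j))" for S
      by (simp add: sum_distrib_left of_bool_conj ac_simps)
    also have "\<dots> S = (\<Sum>i\<in>I \<inter> S. \<Sum>j\<in>J - S. B i j)" for S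
      using fin by (simp add: Diff_eq Compl_eq)
    finally show ?thesis by simp
  qed
  finally show ?thesis .
qed

lemma cut_norm_on_decoupling:
  assumes X: "finite X" and Q: "Q \<subseteq> X" and diag: "\<And>i. i \<in> Q \<Longrightarrow> B i i = 0"
  shows "cut_norm_on Q Q B \<le> 4 * subset_expect X (1/2) (\<lambda>S. cut_norm_on (Q \<inter> S) (Q - S) B)"
proof -
  have fin: "finite Q" using X Q by (rule rev_finite_subset)
  show ?thesis
  proof (rule cut_norm_on_le[OF fin fin])
    fix I J assume I: "I \<subseteq> Q" and J: "J \<subseteq> Q"
    have "\<bar>\<Sum>i\<in>I. \<Sum>j\<in>J. B i j\<bar>
        = 4 * \<bar>subset_expect X (1/2) (\<lambda>S. \<Sum>i\<in>I \<inter> S. \<Sum>j\<in>J - S. B i j)\<bar>"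
      using I J Q diag by (subst sum_eq_4_expect_split_sum[OF X]) (auto simp: abs_mult)
    also have "\<dots> \<le> 4 * subset_expect X (1/2) (\<lambda>S. \<bar>\<Sum>i\<in>I \<inter> S. \<Sum>j\<in>J - S. B i j\<bar>)"
      by (intro mult_left_mono subset_expect_abs_le) auto
    also have "\<dots> \<le> 4 * subset_expect X (1/2) (\<lambda>S. cut_norm_on (Q \<inter> S) (Q - S) B)"
      using I J fin by (intro mult_left_mono subset_expect_mono abs_sum_le_cut_norm_on) auto
    finally show "\<bar>\<Sum>i\<in>I. \<Sum>j\<in>J. B i j\<bar> \<le> \<dots>" .
  qed
qed

lemma expect_cut_norm_on_split_sample:
  assumes X: "finite X" and S: "S \<subseteq> X" and p: "0 \<le> p" "p \<le> 1"
  shows "subset_expect X p (\<lambda>Q. cut_norm_on (Q \<inter> S) (Q - S) B)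
    \<le> 4 * p\<^sup>2 * cut_norm_on X X B
      + 8 * (p * sqrt p) * (col_norm_on X X B + col_norm_on X X (\<lambda>j i. B i j))"
proof -
  have fin: "finite S" "finite (X - S)" using X S by (auto intro: rev_finite_subset[OF X])
  have "subset_expect X p (\<lambda>Q. cut_norm_on (Q \<inter> S) (Q - S) B)
      = subset_expect (S \<union> (X - S)) p (\<lambda>Q. cut_norm_on (Q \<inter> S) (Q - S) B)"
    using S by (simp add: Un_absorb1)
  also have "\<dots> = subset_expect S p (\<lambda>Q1. subset_expect (X - S) p (\<lambda>Q2.
          cut_norm_on ((Q1 \<union> Q2) \<inter> S) ((Q1 \<union> Q2) - S) B))"
    by (rule subset_expect_union[OF fin Diff_disjoint])
  also have "\<dots> = subset_expect S p (\<lambda>Q1. subset_expect (X - S) p (\<lambda>Q2. cut_norm_on Q1 Q2 B))"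
  proof (intro subset_expect_cong refl)
    fix Q1 Q2 assume "Q1 \<subseteq> S" "Q2 \<subseteq> X - S"
    then have "(Q1 \<union> Q2) \<inter> S = Q1" "(Q1 \<union> Q2) - S = Q2" by auto
    then show "cut_norm_on ((Q1 \<union> Q2) \<inter> S) ((Q1 \<union> Q2) - S) B = cut_norm_on Q1 Q2 B" by simp
  qed
  also have "\<dots> \<le> 4 * p\<^sup>2 * cut_norm_on S (X - S) B
      + 8 * (p * sqrt p) * col_norm_on (X - S) S (\<lambda>j i. B i j) + 4 * (p * sqrt p) * col_norm_on S (X - S) B"
    using fin p by (rule expect_cut_norm_on_product_sample)
  also have "\<dots> \<le> 4 * p\<^sup>2 * cut_norm_on X X B
      + 8 * (p * sqrt p) * col_norm_on X X (\<lambda>j i. B i j) + 4 * (p * sqrt p) * (2 * col_norm_on X X B)"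
  proof -
    have "cut_norm_on S (X - S) B \<le> cut_norm_on X X B"
      using X S by (intro cut_norm_on_mono) auto
    moreover have "col_norm_on (X - S) S (\<lambda>j i. B i j) \<le> col_norm_on X X (\<lambda>j i. B i j)"
      using X S by (intro col_norm_on_mono) auto
    moreover have "col_norm_on S (X - S) B \<le> 2 * col_norm_on X X B"
      using X S col_norm_on_nonneg[of X X B] col_norm_on_mono[OF X X, of S "X - S" B B] by auto
    moreover have "0 \<le> p * sqrt p" using p by auto
    ultimately show ?thesis
      by (intro add_mono mult_left_mono) auto
  qed
  finally show ?thesis by (simp add: algebra_simps)
qed

lemma expect_cut_norm_on_zero_diag:
  assumes X: "finite X" and p: "0 \<le> p" "p \<le> 1" and diag: "\<And>i. i \<in> X \<Longrightarrow> B i i = 0"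
  shows "subset_expect X p (\<lambda>Q. cut_norm_on Q Q B)
    \<le> 16 * p\<^sup>2 * cut_norm_on X X B
      + 32 * (p * sqrt p) * (col_norm_on X X B + col_norm_on X X (\<lambda>j i. B i j))"
proof -
  define bound where "bound = 4 * p\<^sup>2 * cut_norm_on X X B
      + 8 * (p * sqrt p) * (col_norm_on X X B + col_norm_on X X (\<lambda>j i. B i j))"
  have "subset_expect X p (\<lambda>Q. cut_norm_on Q Q B)
      \<le> subset_expect X p (\<lambda>Q. 4 * subset_expect X (1/2) (\<lambda>S. cut_norm_on (Q \<inter> S) (Q - S) B))"
    using X p diag by (intro subset_expect_mono cut_norm_on_decoupling) auto
  also have "\<dots> = 4 * subset_expect X (1/2) (\<lambda>S. subset_expect X p (\<lambda>Q. cut_norm_on (Q \<inter> S) (Q - S) B))"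
    unfolding subset_expect_cmult by (rule arg_cong[OF subset_expect_swap])
  also have "\<dots> \<le> 4 * subset_expect X (1/2) (\<lambda>S. bound)"
    unfolding bound_def using X p
    by (intro mult_left_mono subset_expect_mono expect_cut_norm_on_split_sample) auto
  finally show ?thesis using X by (simp add: bound_def)
qed

lemma cut_norm_on_diag_part_le:
  assumes "finite Q"
  shows "cut_norm_on Q Q (diag_part A) \<le> (\<Sum>i\<in>Q. \<bar>A i i\<bar>)"
proof (rule cut_norm_on_le[OF assms assms])
  fix I J assume "I \<subseteq> Q" "J \<subseteq> Q"
  then have "finite I" "finite J" "I \<inter> J \<subseteq> Q" using assms by (auto intro: rev_finite_subset[OF assms])
  then have "\<bar>\<Sum>i\<in>I. \<Sum>j\<in>J. diag_part A i j\<bar> = \<bar>\<Sum>i\<in>I \<inter> J. A i i\<bar>"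
    by (simp add: diag_part_def sum.inter_restrict if_distrib cong: if_cong)
  also have "\<dots> \<le> (\<Sum>i\<in>Q. \<bar>A i i\<bar>)"
    using \<open>I \<inter> J \<subseteq> Q\<close> assms by (intro order.trans[OF sum_abs sum_mono2]) auto
  finally show "\<bar>\<Sum>i\<in>I. \<Sum>j\<in>J. diag_part A i j\<bar> \<le> (\<Sum>i\<in>Q. \<bar>A i i\<bar>)" .
qed

lemma sum_abs_diag_le_cut_norm_on:
  assumes X: "finite X"
  shows "(\<Sum>i\<in>X. \<bar>A i i\<bar>) \<le> 2 * cut_norm_on X X (diag_part A)"
proof -
  define P where "P = {i\<in>X. 0 \<le> A i i}"
  define N where "N = {i\<in>X. A i i < 0}"
  have fin: "finite P" "finite N" using X by (auto simp: P_def N_def)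
  have diag_sum: "(\<Sum>i\<in>I. \<Sum>j\<in>I. diag_part A i j) = (\<Sum>i\<in>I. A i i)" if "finite I" for I
    using that unfolding diag_part_def by (intro sum.cong refl) simp
  have "(\<Sum>i\<in>X. \<bar>A i i\<bar>) = (\<Sum>i\<in>P. \<bar>A i i\<bar>) + (\<Sum>i\<in>N. \<bar>A i i\<bar>)"
    using X by (subst sum.union_disjoint[symmetric]) (auto simp: P_def N_def intro: sum.cong)
  also have "\<dots> = \<bar>\<Sum>i\<in>P. A i i\<bar> + \<bar>\<Sum>i\<in>N. A i i\<bar>"
  proof -
    have "(\<Sum>i\<in>P. \<bar>A i i\<bar>) = (\<Sum>i\<in>P. A i i)"
      unfolding P_def by (rule sum.cong) auto
    moreover have "(\<Sum>i\<in>N. \<bar>A i i\<bar>) = - (\<Sum>i\<in>N. A i i)"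
      unfolding N_def sum_negf[symmetric] by (rule sum.cong) auto
    moreover have "0 \<le> (\<Sum>i\<in>P. A i i)"
      unfolding P_def by (rule sum_nonneg) auto
    moreover have "(\<Sum>i\<in>N. A i i) \<le> 0"
      unfolding N_def by (rule sum_nonpos) auto
    ultimately show ?thesis by simp
  qed
  also have "\<dots> \<le> cut_norm_on X X (diag_part A) + cut_norm_on X X (diag_part A)"
  proof -
    have "P \<subseteq> X" "N \<subseteq> X" by (auto simp: P_def N_def)
    then show ?thesis
      using abs_sum_le_cut_norm_on[OF X X, of P P "diag_part A"] diag_sum[OF fin(1)]
        abs_sum_le_cut_norm_on[OF X X, of N N "diag_part A"] diag_sum[OF fin(2)]
      by simp
  qed
  finally show ?thesis by simp
qed

lemma expect_cut_norm_on_diag_part: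
  assumes X: "finite X" and p: "0 \<le> p" "p \<le> 1"
  shows "subset_expect X p (\<lambda>Q. cut_norm_on Q Q (diag_part A)) \<le> 2 * p * cut_norm_on X X (diag_part A)"
proof -
  have "subset_expect X p (\<lambda>Q. cut_norm_on Q Q (diag_part A)) \<le> subset_expect X p (\<lambda>Q. \<Sum>i\<in>Q. \<bar>A i i\<bar>)"
    using X p by (intro subset_expect_mono cut_norm_on_diag_part_le) (auto intro: rev_finite_subset[OF X])
  also have "\<dots> = p * (\<Sum>i\<in>X. \<bar>A i i\<bar>)"
    using X by (rule subset_expect_sum_elements)
  also have "\<dots> \<le> 2 * p * cut_norm_on X X (diag_part A)"
    using mult_left_mono[OF sum_abs_diag_le_cut_norm_on[OF X, of A] p(1)] by simp
  finally show ?thesis .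
qed

lemma expect_cut_norm_on_le:
  assumes X: "finite X" and p: "0 \<le> p" "p \<le> 1"
  shows "subset_expect X p (\<lambda>Q. cut_norm_on Q Q A)
    \<le> 32 * (p\<^sup>2 * cut_norm_on X X (\<lambda>i j. A i j - diag_part A i j) + p * cut_norm_on X X (diag_part A)
      + p * sqrt p * (col_norm_on X X A + col_norm_on X X (\<lambda>j i. A i j)))"
proof -
  define B and D where "B = (\<lambda>i j. A i j - diag_part A i j)" and "D = diag_part A"
  have B_le_A: "(B i j)\<^sup>2 \<le> (A i j)\<^sup>2" for i j by (simp add: B_def diag_part_def)
  have "subset_expect X p (\<lambda>Q. cut_norm_on Q Q A)
      \<le> subset_expect X p (\<lambda>Q. cut_norm_on Q Q B + cut_norm_on Q Q D)"
    using cut_norm_on_add_le[of _ _ B D] p X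
    by (intro subset_expect_mono) (auto simp: B_def D_def intro: rev_finite_subset[OF X])
  also have "\<dots> \<le> (16 * p\<^sup>2 * cut_norm_on X X B
        + 32 * (p * sqrt p) * (col_norm_on X X B + col_norm_on X X (\<lambda>j i. B i j)))
      + 2 * p * cut_norm_on X X D"
    unfolding subset_expect_add D_def using X p
    by (intro add_mono expect_cut_norm_on_zero_diag expect_cut_norm_on_diag_part)
       (auto simp: B_def diag_part_def)
  also have "\<dots> \<le> 32 * (p\<^sup>2 * cut_norm_on X X B + p * cut_norm_on X X D
      + p * sqrt p * (col_norm_on X X A + col_norm_on X X (\<lambda>j i. A i j)))"
  proof -
    have "col_norm_on X X B + col_norm_on X X (\<lambda>j i. B i j)
        \<le> col_norm_on X X A + col_norm_on X X (\<lambda>j i. A i j)"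
      using X B_le_A by (intro add_mono col_norm_on_mono) auto
    then have "p * sqrt p * (col_norm_on X X B + col_norm_on X X (\<lambda>j i. B i j))
        \<le> p * sqrt p * (col_norm_on X X A + col_norm_on X X (\<lambda>j i. A i j))"
      using p by (intro mult_left_mono) auto
    moreover have "0 \<le> p\<^sup>2 * cut_norm_on X X B" "0 \<le> p * cut_norm_on X X D"
      using p cut_norm_on_nonneg[OF X X] by auto
    moreover have "16 * u + 32 * a + 2 * w \<le> 32 * (u + w + b)"
      if "a \<le> b" "0 \<le> u" "0 \<le> w" for u w a b :: real
      using that by simp
    ultimately show ?thesis unfolding mult.assoc by blast
  qed
  finally show ?thesis unfolding B_def D_def .
qed

lemma powr_three_halves:
  assumes "0 \<le> x"
  shows "x powr (3/2) = x * sqrt (x :: real)"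
proof -
  have "x powr (3/2) = x powr (1 + 1/2)" by simp
  also have "\<dots> = x powr 1 * x powr (1/2)"
    by (rule powr_add)
  also have "\<dots> = x * sqrt x"
    using assms by (simp add: powr_half_sqrt)
  finally show ?thesis .
qed

theorem theorem1p2:
  shows "\<exists>C>0. \<forall>(n::nat) (A::nat \<Rightarrow> nat \<Rightarrow> real) (q::real).
    0 < q \<and> q \<le> real n \<longrightarrow>
    random_subset_expect n (q / real n) (\<lambda>Q. cut_norm Q A)
      \<le> C * ((q / real n)\<^sup>2 * cut_norm {1..n} (\<lambda>i j. A i j - diag_part A i j)
             + (q / real n) * cut_norm {1..n} (diag_part A)
             + (q / real n) powr (3/2) * (col_norm n A + col_norm n (transp_mat A)))"
  apply (intro exI[of _ 32] conjI allI impI)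
   apply simp
  subgoal for n A q
    using expect_cut_norm_on_le[of "{1..n}" "q / real n" A]
    by (simp add: divide_le_eq_1 random_subset_expect_eq_subset_expect cut_norm_eq_cut_norm_on
        col_norm_eq_col_norm_on powr_three_halves transp_mat_def)
  done

end
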